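(* Let $G$ be a 0-1 strongly EFX-orientable graph. Then for every matching $M$ in $G$, the subgraph of $G$ induced by the set of vertices covered by $M$ contains an independent set of size $|M|$.
   Context: All graphs are finite and simple. For a graph $G=(V,E)$ and $v\in V$, $E(v)$ is the set of edges incident to $v$. A graphical instance on $G$ assigns to each vertex $v$ a valuation $f_v:2^E\to\mathbb{R}_{\ge 0}$ that is monotone and satisfies $f_v(X)=f_v(X\cap E(v))$ for all $X\subseteq E$. An orientation of $G$ chooses for each edge one of its endpoints as its head; vertex $v$ receives the bundle $X_v$ of edges whose head is $v$. The orientation is EFX if for all $u,v\in V$ and every $g\in X_v$, $f_u(X_u)\ge f_u(X_v\setminus\{g\})$. A graph $G$ is 0-1 strongly EFX-orientable if for every graphical instance on $G$ in which each $f_v$ is additive with $f_v(\{e\})\in\{0,1\}$ for all edges $e$, there exists an EFX orientation. *)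

theory Defs
  imports Main
begin

definition simple_graph :: "'v set \<Rightarrow> 'v set set \<Rightarrow> bool" where
  "simple_graph V E \<longleftrightarrow> finite V \<and> (\<forall>e\<in>E. e \<subseteq> V \<and> card e = 2)"

definition incident_edges :: "'v set set \<Rightarrow> 'v \<Rightarrow> 'v set set" where
  "incident_edges E v = {e \<in> E. v \<in> e}"

definition val01 :: "'v set set \<Rightarrow> ('v \<Rightarrow> 'v set \<Rightarrow> nat) \<Rightarrow> 'v \<Rightarrow> 'v set set \<Rightarrow> nat" where
  "val01 E w v X = (\<Sum>e\<in>X \<inter> incident_edges E v. w v e)"

(* An orientation assigns to each edge one of its endpoints as head. *)
definition is_orientation :: "'v set set \<Rightarrow> ('v set \<Rightarrow> 'v) \<Rightarrow> bool" where
  "is_orientation E h \<longleftrightarrow> (\<forall>e\<in>E. h e \<in> e)"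

definition bundle_of :: "'v set set \<Rightarrow> ('v set \<Rightarrow> 'v) \<Rightarrow> 'v \<Rightarrow> 'v set set" where
  "bundle_of E h v = {e \<in> E. h e = v}"

definition EFX_orientation ::
  "'v set \<Rightarrow> 'v set set \<Rightarrow> ('v \<Rightarrow> 'v set \<Rightarrow> nat) \<Rightarrow> ('v set \<Rightarrow> 'v) \<Rightarrow> bool" where
  "EFX_orientation V E w h \<longleftrightarrow> is_orientation E h \<and>
     (\<forall>u\<in>V. \<forall>v\<in>V. \<forall>g\<in>bundle_of E h v.
        val01 E w u (bundle_of E h u) \<ge> val01 E w u (bundle_of E h v - {g}))"

definition strongly_EFX_orientable_01 :: "'v set \<Rightarrow> 'v set set \<Rightarrow> bool" where
  "strongly_EFX_orientable_01 V E \<longleftrightarrow>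
     (\<forall>w :: 'v \<Rightarrow> 'v set \<Rightarrow> nat. (\<forall>v e. w v e \<le> 1) \<longrightarrow> (\<exists>h. EFX_orientation V E w h))"

definition matching :: "'v set set \<Rightarrow> 'v set set \<Rightarrow> bool" where
  "matching E M \<longleftrightarrow> M \<subseteq> E \<and> (\<forall>e\<in>M. \<forall>e'\<in>M. e \<noteq> e' \<longrightarrow> e \<inter> e' = {})"

definition independent_set :: "'v set set \<Rightarrow> 'v set \<Rightarrow> bool" where
  "independent_set E S \<longleftrightarrow> (\<forall>e\<in>E. \<not> e \<subseteq> S)"

end

theory Submission
  imports Defs
begin

text \<open>Give every vertex value 1 for its own matching edge and 0 for everything else.
  In an EFX orientation of this instance the head of a matching edge e receives no other edge:
  otherwise the other endpoint of e, whose bundle is then worthless to it, would still see e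
  in the head's bundle after removing some other edge. The heads of the matching edges are
  therefore distinct vertices, and an edge joining two of them would lie in the bundle of one
  of them, i.e. be one of the two disjoint matching edges.\<close>

definition matching_weight :: "'v set set \<Rightarrow> 'v \<Rightarrow> 'v set \<Rightarrow> nat" where
  "matching_weight M v e = (if e \<in> M \<and> v \<in> e then 1 else 0)"

lemma matching_weight_le_1: "matching_weight M v e \<le> 1"
  by (simp add: matching_weight_def)

lemma simple_graph_finite_edges:
  assumes "simple_graph V E"
  shows "finite E"
proof -
  have "E \<subseteq> Pow V" using assms by (auto simp: simple_graph_def)
  moreover have "finite V" using assms by (simp add: simple_graph_def)
  ultimately show ?thesis by (meson finite_Pow_iff finite_subset)
qed

lemma simple_graph_other_endpoint:
  assumes "simple_graph V E" "e \<in> E" "x \<in> e"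
  obtains y where "y \<in> e" "y \<noteq> x"
proof -
  have "card e = 2" using assms by (simp add: simple_graph_def)
  then show ?thesis using assms(3) that by (auto simp: card_2_iff)
qed

lemma matching_disjoint:
  assumes "matching E M" "e \<in> M" "e' \<in> M" "v \<in> e" "v \<in> e'"
  shows "e = e'"
  using assms by (auto simp: matching_def)

lemma val01_matching_weight_eq_0:
  assumes "matching E M" "e \<in> M" "a \<in> e" "e \<notin> X"
  shows "val01 E (matching_weight M) a X = 0"
  unfolding val01_def
proof (rule sum.neutral, rule ballI)
  fix e' assume "e' \<in> X \<inter> incident_edges E a"
  then show "matching_weight M a e' = 0"
    using assms matching_disjoint[OF assms(1) _ assms(2)]
    by (auto simp: matching_weight_def incident_edges_def)
qed

lemma val01_matching_weight_pos:
  assumes "finite E" "matching E M" "e \<in> M" "a \<in> e" "e \<in> X"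
  shows "val01 E (matching_weight M) a X \<ge> 1"
proof -
  have "e \<in> X \<inter> incident_edges E a"
    using assms by (auto simp: matching_def incident_edges_def)
  moreover have "finite (X \<inter> incident_edges E a)"
    using assms(1) by (simp add: incident_edges_def)
  ultimately have "matching_weight M a e \<le> val01 E (matching_weight M) a X"
    unfolding val01_def by (intro member_le_sum) simp_all
  then show ?thesis using assms(3,4) by (simp add: matching_weight_def)
qed

lemma EFX_matching_weight_bundle_head:
  assumes "simple_graph V E" "matching E M" "EFX_orientation V E (matching_weight M) h"
    and "e \<in> M"
  shows "bundle_of E h (h e) = {e}"
proof
  have eE: "e \<in> E" using assms(2,4) by (auto simp: matching_def)
  then have "h e \<in> e" using assms(3) by (simp add: EFX_orientation_def is_orientation_def)
  then obtain a where a: "a \<in> e" "a \<noteq> h e"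
    using simple_graph_other_endpoint[OF assms(1) eE] by blast
  have V: "a \<in> V" "h e \<in> V" using assms(1) eE a \<open>h e \<in> e\<close> by (auto simp: simple_graph_def)
  have efx: "\<And>u v g. u \<in> V \<Longrightarrow> v \<in> V \<Longrightarrow> g \<in> bundle_of E h v \<Longrightarrow>
      val01 E (matching_weight M) u (bundle_of E h v - {g}) \<le> val01 E (matching_weight M) u (bundle_of E h u)"
    using assms(3) by (simp add: EFX_orientation_def)
  show "bundle_of E h (h e) \<subseteq> {e}"
  proof
    fix g assume g: "g \<in> bundle_of E h (h e)"
    show "g \<in> {e}"
    proof (rule ccontr)
      assume "g \<notin> {e}"
      then have "e \<in> bundle_of E h (h e) - {g}" using eE by (auto simp: bundle_of_def)
      then have "val01 E (matching_weight M) a (bundle_of E h (h e) - {g}) \<ge> 1"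
        by (rule val01_matching_weight_pos[OF simple_graph_finite_edges[OF assms(1)] assms(2,4) a(1)])
      moreover have "val01 E (matching_weight M) a (bundle_of E h a) = 0"
        using val01_matching_weight_eq_0[OF assms(2,4) a(1)] a(2) by (auto simp: bundle_of_def)
      moreover have "val01 E (matching_weight M) a (bundle_of E h a)
          \<ge> val01 E (matching_weight M) a (bundle_of E h (h e) - {g})"
        using efx V g by blast
      ultimately show False by simp
    qed
  qed
  show "{e} \<subseteq> bundle_of E h (h e)" using eE by (simp add: bundle_of_def)
qed

lemma matching_heads_inj:
  assumes "matching E M" "is_orientation E h"
  shows "inj_on h M"
proof
  fix x y assume "x \<in> M" "y \<in> M" "h x = h y"
  moreover have "h x \<in> x" "h y \<in> y"
    using assms \<open>x \<in> M\<close> \<open>y \<in> M\<close> by (auto simp: matching_def is_orientation_def)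
  ultimately show "x = y" using matching_disjoint[OF assms(1)] by metis
qed

lemma matching_heads_independent:
  assumes "simple_graph V E" "matching E M" "is_orientation E h"
    and singleton: "\<And>e. e \<in> M \<Longrightarrow> bundle_of E h (h e) = {e}"
  shows "independent_set E (h ` M)"
  unfolding independent_set_def
proof (intro ballI notI)
  fix f assume fE: "f \<in> E" and f_heads: "f \<subseteq> h ` M"
  have "h f \<in> f" using assms(3) fE by (simp add: is_orientation_def)
  then obtain e where e: "e \<in> M" "h f = h e" using f_heads by blast
  then have "f = e" using singleton fE by (auto simp: bundle_of_def)
  obtain y where y: "y \<in> f" "y \<noteq> h f"
    using simple_graph_other_endpoint[OF assms(1) fE \<open>h f \<in> f\<close>] by blast
  then obtain e' where e': "e' \<in> M" "y = h e'" using f_heads by blast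
  then have "f = e'"
    using matching_disjoint[OF assms(2) e(1) e'(1)] \<open>f = e\<close> y assms(2,3)
    by (auto simp: matching_def is_orientation_def)
  then show False using e e' y \<open>f = e\<close> by simp
qed

theorem mainTheorem2:
  fixes V :: "'v set" and E :: "'v set set" and M :: "'v set set"
  assumes "simple_graph V E"
    and "strongly_EFX_orientable_01 V E"
    and "matching E M"
  shows "\<exists>S. S \<subseteq> \<Union>M \<and> independent_set E S \<and> card S = card M"
proof -
  obtain h where efx: "EFX_orientation V E (matching_weight M) h"
    using assms(2) matching_weight_le_1 unfolding strongly_EFX_orientable_01_def by meson
  then have orient: "is_orientation E h" by (simp add: EFX_orientation_def)
  have "h ` M \<subseteq> \<Union>M" using orient assms(3) by (auto simp: matching_def is_orientation_def)
  moreover have "independent_set E (h ` M)"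
    using matching_heads_independent[OF assms(1,3) orient]
      EFX_matching_weight_bundle_head[OF assms(1,3) efx] by blast
  moreover have "card (h ` M) = card M"
    using card_image[OF matching_heads_inj[OF assms(3) orient]] .
  ultimately show ?thesis by blast
qed

end
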